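(* Let $\mathcal{I}$ be a finite set of closed intervals whose start- and endpoints are pairwise distinct, let $k\ge1$, and let $X$ and $\mathcal{S}$ be produced by the construction described in the context. Then every element of $X$ occurs in at most two constraints of $\mathcal{S}$, and $\mathcal{S}$ can be partitioned into two classes such that every element of $X$ occurring in two constraints occurs in one constraint of each class. Consequently, the multigraph with vertex set $\mathcal{S}$ and one edge $\{S,S'\}$ for each element of $X$ lying in the two constraints $S\neq S'$ is bipartite, and its proper edge colorings with $k$ colors correspond to colorings of $X$ in which the elements of each constraint receive pairwise distinct colors.
   Context: Construction. The events are the start- and endpoints of the intervals, scanned in increasing order. We maintain a list of active events (initially empty), a growing ground set $X$ (initially $\mathcal{I}$) and a family $\mathcal{S}$ of constraints (tuples of elements of $X$, initially empty). Whenever the active list is empty, the type of the next event (start or end) fixes the type of the current phase. Start phase: startpoints are appended to the active list. (a) If the active list contains startpoints of $k$ elements $I_1,\dots,I_k$ (actual intervals or virtual elements), add the constraint $(I_1,\dots,I_k)$ and clear the active list. (b) If the active list contains startpoints of $I_1,\dots,I_j$ with $j<k$ and the next event is the endpoint of some interval $I_{j+1}$, create new virtual elements $x_{j+1},\dots,x_k,y_1,\dots,y_{j-1}$ (added to $X$, not used before), add the constraints $(I_1,\dots,I_j,x_{j+1},\dots,x_k)$ and $(y_1,\dots,y_{j-1},I_{j+1},x_{j+1},\dots,x_k)$, and replace the active list by the (virtual) startpoints of $y_1,\dots,y_{j-1}$ (phase remains a start phase; if $j=1$ the list becomes empty). End phase: symmetric, with the roles of start- and endpoints interchanged. A proper edge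 coloring of a multigraph with $k$ colors assigns colors in $\{1,\dots,k\}$ to edges so that any two distinct edges sharing an endpoint get distinct colors. *)

theory Defs
  imports Complex_Main
begin

text \<open>An interval is a pair (a,b) of reals, denoting the closed interval {a..b}.\<close>
type_synonym interval = "real \<times> real"

datatype event = StartEv interval | EndEv interval

fun ev_pos :: "event \<Rightarrow> real" where
  "ev_pos (StartEv I) = fst I"
| "ev_pos (EndEv I) = snd I"

fun ev_is_start :: "event \<Rightarrow> bool" where
  "ev_is_start (StartEv I) = True"
| "ev_is_start (EndEv I) = False"

fun ev_interval :: "event \<Rightarrow> interval" where
  "ev_interval (StartEv I) = I"
| "ev_interval (EndEv I) = I"

definition events :: "interval set \<Rightarrow> event set" where
  "events \<I> = StartEv ` \<I> \<union> EndEv ` \<I>"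

definition valid_intervals :: "interval set \<Rightarrow> bool" where
  "valid_intervals \<I> \<longleftrightarrow> finite \<I> \<and> (\<forall>I\<in>\<I>. fst I \<le> snd I) \<and> inj_on ev_pos (events \<I>)"

definition sorted_events :: "interval set \<Rightarrow> event list" where
  "sorted_events \<I> = sorted_key_list_of_set ev_pos (events \<I>)"

text \<open>Elements of the ground set: actual intervals or virtual elements (fresh names).\<close>
datatype elem = Real interval | Virt nat

text \<open>State of the construction:
  (phase (True = start phase, False = end phase), active list,
   number of virtual elements created so far, list of constraints created so far).
  The family of constraints is a list (indexed by position), since the same tuple
  may arise as two different constraints.\<close>
type_synonym cstate = "bool \<times> elem list \<times> nat \<times> elem list list"

definition cstep :: "nat \<Rightarrow> cstate \<Rightarrow> event \<Rightarrow> cstate" where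
  "cstep k st e =
    (case st of (ph0, act, n, C) \<Rightarrow>
      let ph = (if act = [] then ev_is_start e else ph0) in
      if ev_is_start e = ph then
        (let act' = act @ [Real (ev_interval e)] in
         if length act' = k then (ph, [], n, C @ [act']) else (ph, act', n, C))
      else
        (let j = length act;
             xs = map Virt [n ..< n + (k - j)];
             ys = map Virt [n + (k - j) ..< n + (k - j) + (j - 1)]
         in (ph, ys, n + (k - j) + (j - 1),
             C @ [act @ xs, ys @ [Real (ev_interval e)] @ xs])))"

definition construction :: "nat \<Rightarrow> interval set \<Rightarrow> cstate" where
  "construction k \<I> = fold (\<lambda>e st. cstep k st e) (sorted_events \<I>) (True, [], 0, [])"

definition ground_set :: "nat \<Rightarrow> interval set \<Rightarrow> elem set" where
  "ground_set k \<I> = Real ` \<I> \<union> Virt ` {..< fst (snd (snd (construction k \<I>)))}"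

definition constraints :: "nat \<Rightarrow> interval set \<Rightarrow> elem list list" where
  "constraints k \<I> = snd (snd (snd (construction k \<I>)))"

definition occ :: "elem list list \<Rightarrow> elem \<Rightarrow> nat set" where
  "occ S x = {c. c < length S \<and> x \<in> set (S ! c)}"

text \<open>The multigraph with vertex set S (indices {0..<length S}) and one edge for each
  element x of X lying in two distinct constraints; the ends of edge x are occ S x.\<close>
definition mg_edges :: "elem set \<Rightarrow> elem list list \<Rightarrow> elem set" where
  "mg_edges X S = {x \<in> X. card (occ S x) = 2}"

definition mg_bipartite :: "elem set \<Rightarrow> elem list list \<Rightarrow> bool" where
  "mg_bipartite X S \<longleftrightarrow> (\<exists>A \<subseteq> {..<length S}. \<forall>x \<in> mg_edges X S. card (occ S x \<inter> A) = 1)"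

definition proper_edge_coloring :: "nat \<Rightarrow> elem set \<Rightarrow> elem list list \<Rightarrow> (elem \<Rightarrow> nat) \<Rightarrow> bool" where
  "proper_edge_coloring k X S g \<longleftrightarrow>
     (\<forall>x \<in> mg_edges X S. g x \<in> {1..k}) \<and>
     (\<forall>x \<in> mg_edges X S. \<forall>y \<in> mg_edges X S. x \<noteq> y \<and> occ S x \<inter> occ S y \<noteq> {} \<longrightarrow> g x \<noteq> g y)"

definition constraint_coloring :: "nat \<Rightarrow> elem set \<Rightarrow> elem list list \<Rightarrow> (elem \<Rightarrow> nat) \<Rightarrow> bool" where
  "constraint_coloring k X S f \<longleftrightarrow>
     (\<forall>x \<in> X. f x \<in> {1..k}) \<and> (\<forall>c < length S. distinct (map f (S ! c)))"

end

theory Submission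
  imports Defs
begin

text \<open>Label each constraint by a truth value: a constraint produced in a start phase gets \<open>True\<close>,
  one produced in an end phase \<open>False\<close>, except that the second constraint of a split gets the
  label opposite to the phase. The labels of the constraints containing an element, together with
  the current phase if the element is active, are then pairwise distinct and disjoint from the types
  of the events of that element still to be scanned (a virtual element has no events: it is put into
  its constraints, or into a constraint and the active list, when it is created). As there are only
  two labels, every element lies in at most two constraints, and then in one of each label; this is
  the bipartition. Conversely, a proper edge colouring extends to a constraint colouring row by row,
  since each constraint consists of exactly k distinct elements.\<close>

lemma occ_subset_lessThan: "occ C x \<subseteq> {..<length C}"
  by (auto simp: occ_def)

lemma occ_eq_empty_iff: "occ C x = {} \<longleftrightarrow> x \<notin> (\<Union>r \<in> set C. set r)"
proof -
  have "(\<exists>c < length C. x \<in> set (C ! c)) \<longleftrightarrow> (\<exists>r \<in> set C. x \<in> set r)"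
    by (metis in_set_conv_nth)
  then show ?thesis by (auto simp: occ_def)
qed

lemma occ_snoc: "occ (C @ [r]) x = (if x \<in> set r then insert (length C) (occ C x) else occ C x)"
  by (auto simp: occ_def nth_append less_Suc_eq)

lemma image_occ_snoc:
  "cls(length C := b) ` occ (C @ [r]) x = cls ` occ C x \<union> (if x \<in> set r then {b} else {})"
proof -
  have "length C \<notin> occ C x" using occ_subset_lessThan by blast
  then show ?thesis by (auto simp: occ_snoc image_iff)
qed

lemma inj_on_occ_snoc:
  "inj_on (cls(length C := b)) (occ (C @ [r]) x) \<longleftrightarrow>
     inj_on cls (occ C x) \<and> (x \<in> set r \<longrightarrow> b \<notin> cls ` occ C x)"
proof -
  have "length C \<notin> occ C x" using occ_subset_lessThan by blast
  then show ?thesis by (auto simp: occ_snoc inj_on_def image_iff)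
qed

lemma card_le_2_if_inj_on_bool: "inj_on (cls :: 'a \<Rightarrow> bool) A \<Longrightarrow> card A \<le> 2"
  using card_mono[of UNIV "cls ` A"] by (simp add: card_image)

lemma both_values_if_inj_on_bool:
  assumes "inj_on (cls :: 'a \<Rightarrow> bool) A" "card A = 2"
  shows "(\<exists>c \<in> A. cls c) \<and> (\<exists>c \<in> A. \<not> cls c)"
proof -
  have "card (cls ` A) = card (UNIV :: bool set)"
    using assms by (simp add: card_image)
  then have "cls ` A = UNIV"
    by (simp add: card_subset_eq)
  then show ?thesis
    by (metis UNIV_I imageE)
qed

lemma mg_bipartite_if_edges_separated:
  assumes "\<forall>x \<in> X. card (occ S x) = 2 \<longrightarrow> (\<exists>c \<in> occ S x. cls c) \<and> (\<exists>c \<in> occ S x. \<not> cls c)"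
  shows "mg_bipartite X S"
  unfolding mg_bipartite_def
proof (intro exI conjI ballI)
  let ?A = "{c. c < length S \<and> cls c}"
  show "?A \<subseteq> {..<length S}" by auto
  fix x assume "x \<in> mg_edges X S"
  then have card2: "card (occ S x) = 2" and sep: "(\<exists>c \<in> occ S x. cls c) \<and> (\<exists>c \<in> occ S x. \<not> cls c)"
    using assms by (auto simp: mg_edges_def)
  have fin: "finite (occ S x)"
    by (rule card_ge_0_finite) (simp add: card2)
  have "occ S x \<inter> ?A \<noteq> {}"
    using sep by (auto simp: occ_def)
  then have "0 < card (occ S x \<inter> ?A)"
    using fin by (simp add: card_gt_0_iff)
  moreover have "occ S x \<inter> ?A \<subset> occ S x"
    using sep by auto
  then have "card (occ S x \<inter> ?A) < 2"
    using psubset_card_mono[OF fin] card2 by simp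
  ultimately show "card (occ S x \<inter> ?A) = 1" by simp
qed

lemma proper_edge_coloring_if_constraint_coloring:
  assumes "constraint_coloring k X S f"
  shows "proper_edge_coloring k X S f"
  unfolding proper_edge_coloring_def
proof (intro conjI ballI impI)
  fix x assume "x \<in> mg_edges X S"
  then show "f x \<in> {1..k}"
    using assms by (auto simp: mg_edges_def constraint_coloring_def)
next
  fix x y assume xy: "x \<noteq> y \<and> occ S x \<inter> occ S y \<noteq> {}"
  then obtain c where "c < length S" "x \<in> set (S ! c)" "y \<in> set (S ! c)"
    by (auto simp: occ_def)
  with xy assms show "f x \<noteq> f y"
    by (auto simp: constraint_coloring_def distinct_map inj_on_def)
qed

lemma inj_on_extend:
  assumes "finite A" "finite K" "card A \<le> card K" "B \<subseteq> A" "inj_on g B" "g ` B \<subseteq> K"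
  obtains h where "inj_on h A" "h ` A \<subseteq> K" "\<forall>x \<in> B. h x = g x"
proof -
  have "finite B"
    using assms(1,4) finite_subset by blast
  then have "card (A - B) = card A - card B" "card (K - g ` B) = card K - card B"
    using assms by (simp_all add: card_Diff_subset card_image)
  then have "card (A - B) \<le> card (K - g ` B)"
    using assms(3) by simp
  then obtain h0 where h0: "h0 ` (A - B) \<subseteq> K - g ` B" "inj_on h0 (A - B)"
    using card_le_inj[of "A - B" "K - g ` B"] assms(1,2) by blast
  let ?h = "\<lambda>x. if x \<in> B then g x else h0 x"
  have "inj_on ?h A"
  proof (rule inj_onI)
    fix x y assume "x \<in> A" "y \<in> A" "?h x = ?h y"
    with assms(5) h0 show "x = y"
      by (cases "x \<in> B"; cases "y \<in> B") (auto dest: inj_onD)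
  qed
  moreover have "?h ` A \<subseteq> K"
    using assms(6) h0(1) by auto
  ultimately show thesis
    using that by simp
qed

lemma constraint_coloring_extending_edge_coloring:
  assumes "k \<ge> 1"
    and rows: "\<forall>c < length S. length (S ! c) = k \<and> distinct (S ! c)"
    and non_edges: "\<And>x. x \<notin> mg_edges X S \<Longrightarrow> card (occ S x) \<le> 1"
    and g: "proper_edge_coloring k X S g"
  obtains f where "constraint_coloring k X S f" "\<forall>x \<in> mg_edges X S. f x = g x"
proof -
  let ?E = "mg_edges X S"
  have "\<forall>c \<in> {..<length S}. \<exists>h.
      inj_on h (set (S ! c)) \<and> h ` set (S ! c) \<subseteq> {1..k} \<and> (\<forall>x \<in> set (S ! c) \<inter> ?E. h x = g x)"
  proof
    fix c assume "c \<in> {..<length S}"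
    then have c: "c < length S" by simp
    have inj: "inj_on g (set (S ! c) \<inter> ?E)"
    proof (rule inj_onI)
      fix x y assume x: "x \<in> set (S ! c) \<inter> ?E" and y: "y \<in> set (S ! c) \<inter> ?E" and "g x = g y"
      moreover have "c \<in> occ S x \<inter> occ S y"
        using c x y by (simp add: occ_def)
      ultimately show "x = y"
        using g unfolding proper_edge_coloring_def by blast
    qed
    have card: "card (set (S ! c)) \<le> card {1..k}"
      using rows c by (simp add: distinct_card)
    have range: "g ` (set (S ! c) \<inter> ?E) \<subseteq> {1..k}"
      using g by (auto simp: proper_edge_coloring_def)
    obtain h where "inj_on h (set (S ! c))" "h ` set (S ! c) \<subseteq> {1..k}" "\<forall>x \<in> set (S ! c) \<inter> ?E. h x = g x"
      by (rule inj_on_extend[OF finite_set finite_atLeastAtMost card Int_lower1 inj range])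
    then show "\<exists>h. inj_on h (set (S ! c)) \<and> h ` set (S ! c) \<subseteq> {1..k} \<and> (\<forall>x \<in> set (S ! c) \<inter> ?E. h x = g x)"
      by blast
  qed
  then have "\<exists>H. \<forall>c \<in> {..<length S}. inj_on (H c) (set (S ! c)) \<and>
      H c ` set (S ! c) \<subseteq> {1..k} \<and> (\<forall>x \<in> set (S ! c) \<inter> ?E. H c x = g x)"
    by (rule bchoice)
  then obtain H where H: "\<And>c. c < length S \<Longrightarrow> inj_on (H c) (set (S ! c)) \<and>
      H c ` set (S ! c) \<subseteq> {1..k} \<and> (\<forall>x \<in> set (S ! c) \<inter> ?E. H c x = g x)"
    by (meson lessThan_iff)
  define f where "f x = (if x \<in> ?E then g x else if occ S x = {} then 1 else H (the_elem (occ S x)) x)" for x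
  have f_row: "f x = H c x" if c: "c < length S" and x: "x \<in> set (S ! c)" for c x
  proof (cases "x \<in> ?E")
    case True
    then show ?thesis
      using H c x by (simp add: f_def)
  next
    case False
    have "c \<in> occ S x" "finite (occ S x)"
      using c x finite_subset[OF occ_subset_lessThan] by (auto simp: occ_def)
    then have "occ S x = {c}"
      using non_edges[OF False] by (auto simp: card_le_Suc0_iff_eq)
    then show ?thesis
      using False by (simp add: f_def)
  qed
  have "constraint_coloring k X S f"
    unfolding constraint_coloring_def
  proof (intro conjI allI ballI impI)
    fix x assume "x \<in> X"
    show "f x \<in> {1..k}"
    proof (cases "x \<in> ?E \<or> occ S x = {}")
      case True
      then show ?thesis
        using g \<open>k \<ge> 1\<close> by (auto simp: f_def proper_edge_coloring_def)
    next
      case False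
      then obtain c where "c < length S" "x \<in> set (S ! c)"
        by (auto simp: occ_def)
      then show ?thesis
        using H f_row by (metis image_subset_iff)
    qed
  next
    fix c assume c: "c < length S"
    have "map f (S ! c) = map (H c) (S ! c)"
      using f_row c by simp
    moreover have "distinct (map (H c) (S ! c))"
      using H[OF c] rows c by (simp add: distinct_map)
    ultimately show "distinct (map f (S ! c))"
      by metis
  qed
  moreover have "\<forall>x \<in> ?E. f x = g x"
    by (simp add: f_def)
  ultimately show thesis
    using that by blast
qed

lemma sorted_events:
  assumes "valid_intervals \<I>"
  shows "distinct (sorted_events \<I>)" "set (sorted_events \<I>) = events \<I>"
proof -
  interpret folding_insort_key "(\<le>) :: real \<Rightarrow> _" "(<)" "events \<I>" ev_pos
    rewrites "linorder.sorted_key_list_of_set (\<le>) ev_pos = sorted_key_list_of_set ev_pos"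
    by unfold_locales (use assms in \<open>simp_all add: valid_intervals_def sorted_key_list_of_set_def
      linorder.sorted_key_list_of_set_def[OF linorder_axioms] insort_key_def
      linorder.insort_key_def[OF linorder_axioms]\<close>)
  have "finite (events \<I>)"
    using assms by (simp add: valid_intervals_def events_def)
  then show "distinct (sorted_events \<I>)" "set (sorted_events \<I>) = events \<I>"
    using distinct_sorted_key_list_of_set[of "events \<I>"] by (simp_all add: sorted_events_def distinct_map)
qed

lemma event_eqI: "ev_is_start e = ev_is_start e' \<Longrightarrow> ev_interval e = ev_interval e' \<Longrightarrow> e = e'"
  by (cases e; cases e') auto

text \<open>\<open>U\<close> is the set of events not yet scanned and \<open>cls c\<close> the label of the \<open>c\<close>-th constraint.\<close>

fun scan_inv :: "interval set \<Rightarrow> nat \<Rightarrow> event set \<Rightarrow> cstate \<Rightarrow> (nat \<Rightarrow> bool) \<Rightarrow> bool" where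
  "scan_inv \<I> k U (ph, act, n, C) cls \<longleftrightarrow>
     U \<subseteq> events \<I> \<and>
     (\<forall>r \<in> set C. length r = k \<and> distinct r) \<and>
     length act < k \<and> distinct act \<and>
     set act \<union> (\<Union>r \<in> set C. set r) \<subseteq> Real ` \<I> \<union> Virt ` {..<n} \<and>
     (\<forall>x. inj_on cls (occ C x) \<and> (x \<in> set act \<longrightarrow> ph \<notin> cls ` occ C x)) \<and>
     (\<forall>e \<in> U. ev_is_start e \<notin> cls ` occ C (Real (ev_interval e)) \<and>
              (Real (ev_interval e) \<in> set act \<longrightarrow> ev_is_start e \<noteq> ph))"

lemma scan_inv_init: "k \<ge> 1 \<Longrightarrow> scan_inv \<I> k (events \<I>) (True, [], 0, []) cls"
  by (simp add: occ_def)

context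
  fixes \<I> k U ph0 act n C cls e
  assumes inv: "scan_inv \<I> k U (ph0, act, n, C) cls" and e_in_U: "e \<in> U"
begin

abbreviation "ph \<equiv> if act = [] then ev_is_start e else ph0"

lemma phase_if_active: "x \<in> set act \<Longrightarrow> ph = ph0"
  by auto

lemma ev_interval_mem: "ev_interval e \<in> \<I>"
  using inv e_in_U by (cases e) (auto simp: events_def)

lemma same_phase_event_unused:
  assumes "ev_is_start e = ph"
  shows "ph \<notin> cls ` occ C (Real (ev_interval e))" "Real (ev_interval e) \<notin> set act"
  using inv e_in_U assms phase_if_active by auto

lemma other_event_of_interval:
  "e' \<in> U - {e} \<Longrightarrow> ev_interval e' = ev_interval e \<Longrightarrow> ev_is_start e' = (\<not> ev_is_start e)"
  using event_eqI[of e' e] by auto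

lemma scan_inv_extend_active:
  assumes t: "ev_is_start e = ph" and len: "Suc (length act) < k"
  shows "scan_inv \<I> k (U - {e}) (ph, act @ [Real (ev_interval e)], n, C) cls"
  using inv len t ev_interval_mem same_phase_event_unused[OF t] other_event_of_interval phase_if_active
  by auto

lemma scan_inv_close_constraint:
  assumes t: "ev_is_start e = ph" and len: "Suc (length act) = k"
  shows "scan_inv \<I> k (U - {e}) (ph, [], n, C @ [act @ [Real (ev_interval e)]]) (cls(length C := ph))"
proof -
  let ?r = "act @ [Real (ev_interval e)]"
  note new = same_phase_event_unused[OF t]
  have row_class: "ph \<notin> cls ` occ C x" if "x \<in> set ?r" for x
    using that new inv phase_if_active by auto
  have row_pending: "ev_is_start e' \<noteq> ph"
    if "e' \<in> U - {e}" "Real (ev_interval e') \<in> set ?r" for e'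
    using that inv t other_event_of_interval phase_if_active by auto
  show ?thesis
    unfolding scan_inv.simps
  proof (intro conjI)
    show "U - {e} \<subseteq> events \<I>" "length [] < k" "distinct []"
      using inv len by auto
    show "\<forall>r \<in> set (C @ [?r]). length r = k \<and> distinct r"
      using inv len new by auto
    show "set [] \<union> (\<Union>r \<in> set (C @ [?r]). set r) \<subseteq> Real ` \<I> \<union> Virt ` {..<n}"
      using inv ev_interval_mem by auto
    show "\<forall>x. inj_on (cls(length C := ph)) (occ (C @ [?r]) x) \<and>
        (x \<in> set [] \<longrightarrow> ph \<notin> cls(length C := ph) ` occ (C @ [?r]) x)"
      unfolding inj_on_occ_snoc using inv row_class by auto
    show "\<forall>e' \<in> U - {e}. ev_is_start e' \<notin> cls(length C := ph) ` occ (C @ [?r]) (Real (ev_interval e')) \<and>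
        (Real (ev_interval e') \<in> set [] \<longrightarrow> ev_is_start e' \<noteq> ph)"
      unfolding image_occ_snoc using inv row_pending by auto
  qed
qed

lemma scan_inv_split:
  assumes t: "ev_is_start e \<noteq> ph"
  defines "j \<equiv> length act"
  defines "xs \<equiv> map Virt [n ..< n + (k - j)]"
    and "ys \<equiv> map Virt [n + (k - j) ..< n + (k - j) + (j - 1)]"
  shows "scan_inv \<I> k (U - {e}) (ph, ys, n + (k - j) + (j - 1),
           C @ [act @ xs, ys @ [Real (ev_interval e)] @ xs]) (cls(length C := ph, Suc (length C) := \<not> ph))"
proof -
  let ?r1 = "act @ xs" and ?r2 = "ys @ [Real (ev_interval e)] @ xs"
  let ?n' = "n + (k - j) + (j - 1)"
  have act: "act \<noteq> []" "ph = ph0" "j < k" "1 \<le> j"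
    using t inv by (auto simp: j_def Suc_le_eq)
  have fresh: "occ C (Virt m) = {}" "Virt m \<notin> set act" if "n \<le> m" for m
    using inv that by (auto simp: occ_eq_empty_iff)
  have xs: "set xs = Virt ` {n ..< n + (k - j)}" "length xs = k - j" "distinct xs"
    by (auto simp: xs_def distinct_map inj_on_def)
  have ys: "set ys = Virt ` {n + (k - j) ..< ?n'}" "length ys = j - 1" "distinct ys"
    by (auto simp: ys_def distinct_map inj_on_def)
  have row1_class: "ph \<notin> cls ` occ C x" if "x \<in> set ?r1" for x
    using that inv act(2) xs fresh by auto
  have row2_class: "(\<not> ph) \<notin> cls ` occ C x" if "x \<in> set ?r2" for x
    using that inv e_in_U t xs ys fresh by auto
  have ys_fresh: "x \<notin> set ?r1 \<and> occ C x = {}" if "x \<in> set ys" for x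
    using that xs ys fresh by auto
  have snoc2: "cls(length C := ph, Suc (length C) := \<not> ph) = (cls(length C := ph))(length (C @ [?r1]) := \<not> ph)"
    "C @ [?r1, ?r2] = (C @ [?r1]) @ [?r2]"
    by simp_all
  show ?thesis
    unfolding scan_inv.simps
  proof (intro conjI)
    show "U - {e} \<subseteq> events \<I>" "distinct ys"
      using inv ys by auto
    show "length ys < k"
      using act ys by simp
    show "\<forall>r \<in> set (C @ [?r1, ?r2]). length r = k \<and> distinct r"
      using inv act xs ys fresh by (auto simp: j_def)
    show "set ys \<union> (\<Union>r \<in> set (C @ [?r1, ?r2]). set r) \<subseteq> Real ` \<I> \<union> Virt ` {..<?n'}"
      using inv ev_interval_mem xs ys by auto
    show "\<forall>x. inj_on (cls(length C := ph, Suc (length C) := \<not> ph)) (occ (C @ [?r1, ?r2]) x) \<and>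
        (x \<in> set ys \<longrightarrow> ph \<notin> cls(length C := ph, Suc (length C) := \<not> ph) ` occ (C @ [?r1, ?r2]) x)"
      unfolding snoc2 inj_on_occ_snoc image_occ_snoc
      using inv row1_class row2_class ys_fresh by auto
    show "\<forall>e' \<in> U - {e}. ev_is_start e' \<notin> cls(length C := ph, Suc (length C) := \<not> ph) ` occ (C @ [?r1, ?r2]) (Real (ev_interval e')) \<and>
        (Real (ev_interval e') \<in> set ys \<longrightarrow> ev_is_start e' \<noteq> ph)"
    proof
      fix e' assume e': "e' \<in> U - {e}"
      let ?x = "Real (ev_interval e')"
      have "ev_is_start e' \<notin> cls ` occ C ?x" "?x \<in> set ?r1 \<Longrightarrow> ev_is_start e' \<noteq> ph"
        using inv e' act(2) xs by auto
      moreover have "?x \<in> set ?r2 \<Longrightarrow> ev_is_start e' = ph"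
        using other_event_of_interval[OF e'] t xs ys by auto
      moreover have "?x \<notin> set ys"
        using ys by auto
      ultimately show "ev_is_start e' \<notin> cls(length C := ph, Suc (length C) := \<not> ph) ` occ (C @ [?r1, ?r2]) ?x \<and>
          (?x \<in> set ys \<longrightarrow> ev_is_start e' \<noteq> ph)"
        unfolding snoc2 image_occ_snoc by auto
    qed
  qed
qed

lemma scan_inv_cstep: "\<exists>cls'. scan_inv \<I> k (U - {e}) (cstep k (ph0, act, n, C) e) cls'"
proof (cases "ev_is_start e = ph")
  case True
  note step = cstep_def Let_def prod.case if_P[OF True] length_append_singleton
  show ?thesis
  proof (cases "Suc (length act) = k")
    case closing: True
    show ?thesis
      unfolding step if_P[OF closing] using scan_inv_close_constraint[OF True closing] by blast
  next
    case False
    moreover have "length act < k"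
      using inv by simp
    ultimately have "Suc (length act) < k"
      by simp
    then show ?thesis
      unfolding step if_not_P[OF False] using scan_inv_extend_active[OF True] by blast
  qed
next
  case False
  show ?thesis
    unfolding cstep_def Let_def prod.case if_not_P[OF False]
    using scan_inv_split[OF False] by blast
qed

end

lemma scan_inv_fold:
  "distinct es \<Longrightarrow> scan_inv \<I> k (set es \<union> V) st cls \<Longrightarrow> V \<inter> set es = {} \<Longrightarrow>
     \<exists>cls'. scan_inv \<I> k V (fold (\<lambda>e st. cstep k st e) es st) cls'"
proof (induction es arbitrary: st cls)
  case Nil
  then show ?case
    by auto
next
  case (Cons e es)
  obtain ph act n C where st: "st = (ph, act, n, C)"
    by (cases st)
  have "e \<in> set (e # es) \<union> V"
    by simp
  from scan_inv_cstep[OF Cons.prems(2)[unfolded st] this]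
  obtain cls' where "scan_inv \<I> k (set (e # es) \<union> V - {e}) (cstep k st e) cls'"
    unfolding st by blast
  moreover have "set (e # es) \<union> V - {e} = set es \<union> V"
    using Cons.prems(1,3) by auto
  ultimately have "scan_inv \<I> k (set es \<union> V) (cstep k st e) cls'"
    by simp
  then show ?case
    using Cons.IH Cons.prems(1,3) by auto
qed

lemma scan_inv_construction:
  assumes "valid_intervals \<I>" "k \<ge> 1"
  obtains cls where "scan_inv \<I> k {} (construction k \<I>) cls"
proof -
  have "scan_inv \<I> k (set (sorted_events \<I>) \<union> {}) (True, [], 0, []) undefined"
    using scan_inv_init[OF assms(2)] sorted_events[OF assms(1)] by simp
  then show thesis
    using scan_inv_fold[OF sorted_events(1)[OF assms(1)]] that unfolding construction_def by blast
qed

lemma constraints_wellformed_labelled: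
  assumes "valid_intervals \<I>" "k \<ge> 1"
  obtains cls :: "nat \<Rightarrow> bool" where
    "\<forall>c < length (constraints k \<I>). length (constraints k \<I> ! c) = k \<and> distinct (constraints k \<I> ! c)"
    "\<And>x. occ (constraints k \<I>) x \<noteq> {} \<Longrightarrow> x \<in> ground_set k \<I>"
    "\<And>x. inj_on cls (occ (constraints k \<I>) x)"
proof -
  obtain cls where inv: "scan_inv \<I> k {} (construction k \<I>) cls"
    using scan_inv_construction[OF assms] .
  obtain ph act n C where st: "construction k \<I> = (ph, act, n, C)"
    by (cases "construction k \<I>") auto
  show thesis
  proof (rule that[of cls])
    show "\<forall>c < length (constraints k \<I>). length (constraints k \<I> ! c) = k \<and> distinct (constraints k \<I> ! c)"
      using inv st by (simp add: constraints_def)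
    show "occ (constraints k \<I>) x \<noteq> {} \<Longrightarrow> x \<in> ground_set k \<I>" for x
      using inv st by (auto simp: constraints_def ground_set_def occ_eq_empty_iff)
    show "inj_on cls (occ (constraints k \<I>) x)" for x
      using inv st by (simp add: constraints_def)
  qed
qed

theorem lemma4:
  fixes \<I> :: "interval set" and k :: nat
  assumes "valid_intervals \<I>" and "k \<ge> 1"
  defines "X \<equiv> ground_set k \<I>" and "S \<equiv> constraints k \<I>"
  shows "(\<forall>x \<in> X. card (occ S x) \<le> 2)
       \<and> (\<exists>cls :: nat \<Rightarrow> bool. \<forall>x \<in> X. card (occ S x) = 2 \<longrightarrow>
            (\<exists>c \<in> occ S x. cls c) \<and> (\<exists>c \<in> occ S x. \<not> cls c))
       \<and> mg_bipartite X S
       \<and> (\<forall>f. constraint_coloring k X S f \<longrightarrow> proper_edge_coloring k X S f)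
       \<and> (\<forall>g. proper_edge_coloring k X S g \<longrightarrow>
            (\<exists>f. constraint_coloring k X S f \<and> (\<forall>x \<in> mg_edges X S. f x = g x)))"
proof -
  obtain cls :: "nat \<Rightarrow> bool" where
      rows: "\<forall>c < length S. length (S ! c) = k \<and> distinct (S ! c)"
      and support: "\<And>x. occ S x \<noteq> {} \<Longrightarrow> x \<in> X"
      and classes: "\<And>x. inj_on cls (occ S x)"
    using constraints_wellformed_labelled[OF assms(1,2)] unfolding X_def S_def by blast
  have at_most_two: "card (occ S x) \<le> 2" for x
    using card_le_2_if_inj_on_bool[OF classes] .
  have separated: "\<forall>x \<in> X. card (occ S x) = 2 \<longrightarrow> (\<exists>c \<in> occ S x. cls c) \<and> (\<exists>c \<in> occ S x. \<not> cls c)"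
    using both_values_if_inj_on_bool[OF classes] by blast
  have non_edges: "card (occ S x) \<le> 1" if "x \<notin> mg_edges X S" for x
  proof (cases "occ S x = {}")
    case False
    then show ?thesis
      using that support at_most_two[of x] by (auto simp: mg_edges_def)
  qed simp
  have "\<forall>g. proper_edge_coloring k X S g \<longrightarrow>
      (\<exists>f. constraint_coloring k X S f \<and> (\<forall>x \<in> mg_edges X S. f x = g x))"
    using constraint_coloring_extending_edge_coloring[OF assms(2) rows non_edges] by blast
  then show ?thesis
    using at_most_two separated mg_bipartite_if_edges_separated[OF separated]
      proper_edge_coloring_if_constraint_coloring by blast
qed

end
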